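(* Let $\delta\in(0,1)$, $\sigma_z^2>0$, let $B\sim p_\beta$ (finite second moment) and $Z\sim N(0,1)$ be independent, and let $\eta(a;\tau)=(|a|-\tau)_+\mathrm{sign}(a)$. Let $(\chi,\hat\sigma,\lambda)$ with $\chi>0$, $\hat\sigma>0$, $\lambda>0$ satisfy \[ \hat{\sigma}^2=\sigma_z^2+\frac{1}{\delta}\mathbb{E}_{B,Z}\left[(\eta(B+\hat{\sigma}Z; \chi \hat{\sigma})-B)^2\right],\qquad \lambda=\chi\hat{\sigma}\left(1-\frac{1}{\delta}\mathbb{P}(|B+\hat{\sigma}Z|>\chi \hat{\sigma})\right), \] where $\hat\sigma=\hat\sigma(\chi)$ is determined by the first equation and $\lambda=\lambda(\chi)$ by the second. Then $\frac{d \lambda}{d \chi} >0$.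
   Context: These equations are the fixed-point equations that describe the asymptotic behavior of the LASSO solution with regularization parameter $\lambda>0$ under Gaussian design; for $\sigma_z^2>0$ the first equation has a unique solution $\hat\sigma$ for each $\chi$. *)

theory Defs
  imports "HOL-Probability.Probability"
begin

definition soft_thresh :: "real \<Rightarrow> real \<Rightarrow> real" where
  "soft_thresh a \<tau> = max (\<bar>a\<bar> - \<tau>) 0 * sgn a"

definition gauss01 :: "real measure" where
  "gauss01 = density lborel std_normal_density"

definition BZ_law :: "real measure \<Rightarrow> (real \<times> real) measure" where
  "BZ_law P = P \<Otimes>\<^sub>M gauss01"

definition lasso_mse :: "real measure \<Rightarrow> real \<Rightarrow> real \<Rightarrow> real" where
  "lasso_mse P chi \<sigma> =
     integral\<^sup>L (BZ_law P)
       (\<lambda>bz. (soft_thresh (fst bz + \<sigma> * snd bz) (chi * \<sigma>) - fst bz)\<^sup>2)"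

definition lasso_prob :: "real measure \<Rightarrow> real \<Rightarrow> real \<Rightarrow> real" where
  "lasso_prob P chi \<sigma> =
     measure (BZ_law P) {bz \<in> space (BZ_law P). \<bar>fst bz + \<sigma> * snd bz\<bar> > chi * \<sigma>}"

definition fp_eq :: "real measure \<Rightarrow> real \<Rightarrow> real \<Rightarrow> real \<Rightarrow> real \<Rightarrow> bool" where
  "fp_eq P \<delta> \<sigma>z2 chi \<sigma> \<longleftrightarrow> \<sigma>\<^sup>2 = \<sigma>z2 + (1 / \<delta>) * lasso_mse P chi \<sigma>"

definition lasso_lambda :: "real measure \<Rightarrow> real \<Rightarrow> real \<Rightarrow> real \<Rightarrow> real" where
  "lasso_lambda P \<delta> chi \<sigma> = chi * \<sigma> * (1 - (1 / \<delta>) * lasso_prob P chi \<sigma>)"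

end

theory Submission
  imports Defs "HOL-Real_Asymp.Real_Asymp"
begin

text \<open>
  With \<open>\<mu> = B / \<sigma>\<close>, Fubini and Gaussian tail integrals turn both expectations into
  \<open>\<sigma>\<^sup>2 E r(\<mu>, \<chi>)\<close> and \<open>E p(\<mu>, \<chi>)\<close>, where \<open>p(m, c) = P(\<bar>m + Z\<bar> > c)\<close> and \<open>r\<close> is an explicit
  combination of \<open>p\<close> and the normal density. Since \<open>B\<close> has a finite second moment these averages
  are \<open>C\<^sup>1\<close> in \<open>(\<chi>, \<sigma>)\<close>, with partial derivatives given by the averages \<open>P = E p\<close>, \<open>Q\<close> (density
  of \<open>\<bar>\<mu> + Z\<bar>\<close> at \<open>\<chi>\<close>), \<open>R = E \<mu> (\<phi>(\<chi> - \<mu>) - \<phi>(\<chi> + \<mu>)) \<ge> 0\<close> and \<open>D = E \<mu>\<^sup>2 (1 - p) \<ge> 0\<close>.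

  The implicit function theorem gives \<open>\<sigma>' = \<sigma> (\<chi> P - Q) / (A + R - \<chi> (\<chi> P - Q))\<close> with
  \<open>A = \<delta> - P\<close>; the denominator equals \<open>\<delta> - E r + D\<close>, which is positive because the fixed point
  equation forces \<open>E r < \<delta>\<close>. Differentiating \<open>\<lambda> = \<chi> \<sigma> (1 - P / \<delta>)\<close> yields
  \<open>\<delta> \<lambda>' = \<sigma> A + \<chi> \<sigma> Q + \<chi> \<sigma>' (A + R)\<close>, and \<open>A > 0\<close> because \<open>\<lambda> > 0\<close>. If \<open>\<chi> P \<ge> Q\<close> every term
  is nonnegative; otherwise clearing the denominator leaves a sum of nonnegative terms.
\<close>

section \<open>Differentiation under the integral sign and implicit functions\<close>

lemma integrable_of_has_real_derivative_bounded:
  fixes f f' :: "real \<Rightarrow> 'b \<Rightarrow> real" and w :: "'b \<Rightarrow> real"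
  assumes x0: "x0 \<in> {lo<..<hi}" and x: "x \<in> {lo<..<hi}"
    and der: "\<And>x b. x \<in> {lo<..<hi} \<Longrightarrow> b \<in> space M \<Longrightarrow>
      ((\<lambda>x. f x b) has_real_derivative f' x b) (at x)"
    and bnd: "\<And>x b. x \<in> {lo<..<hi} \<Longrightarrow> b \<in> space M \<Longrightarrow> \<bar>f' x b\<bar> \<le> w b"
    and w: "integrable M w" and int0: "integrable M (f x0)"
    and meas: "f x \<in> borel_measurable M"
  shows "integrable M (f x)"
proof (rule Bochner_Integration.integrable_bound)
  show "integrable M (\<lambda>b. \<bar>f x0 b\<bar> + w b * \<bar>x - x0\<bar>)"
    using int0 w by auto
  show "AE b in M. norm (f x b) \<le> norm (\<bar>f x0 b\<bar> + w b * \<bar>x - x0\<bar>)"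
  proof (intro AE_I2)
    fix b assume b: "b \<in> space M"
    have "norm (f x b - f x0 b) \<le> w b * norm (x - x0)"
      using der bnd b x0 x
      by (intro field_differentiable_bound[where S="{lo<..<hi}" and f="\<lambda>x. f x b"])
         (auto intro: has_field_derivative_at_within)
    moreover have "0 \<le> w b" using bnd[OF x0 b] by linarith
    ultimately show "norm (f x b) \<le> norm (\<bar>f x0 b\<bar> + w b * \<bar>x - x0\<bar>)"
      by simp
  qed
qed (rule meas)

lemma tendsto_integral_at:
  fixes g :: "'p::first_countable_topology \<Rightarrow> 'b \<Rightarrow> real" and w :: "'b \<Rightarrow> real"
  assumes S: "open S" "p0 \<in> S"
    and lim: "\<And>b. b \<in> space M \<Longrightarrow> ((\<lambda>p. g p b) \<longlongrightarrow> l b) (at p0)"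
    and meas: "\<And>p. p \<in> S \<Longrightarrow> p \<noteq> p0 \<Longrightarrow> g p \<in> borel_measurable M"
    and meas_l: "l \<in> borel_measurable M"
    and bnd: "\<And>p b. p \<in> S \<Longrightarrow> p \<noteq> p0 \<Longrightarrow> b \<in> space M \<Longrightarrow> \<bar>g p b\<bar> \<le> w b"
    and w: "integrable M w"
  shows "((\<lambda>p. \<integral>b. g p b \<partial>M) \<longlongrightarrow> (\<integral>b. l b \<partial>M)) (at p0)"
  unfolding tendsto_at_iff_sequentially
proof (intro allI impI)
  fix X :: "nat \<Rightarrow> 'p"
  assume Xne: "\<forall>i. X i \<in> UNIV - {p0}" and Xl: "X \<longlonglongrightarrow> p0"
  have "\<forall>\<^sub>F n in sequentially. X n \<in> S"
    using Xl S by (intro topological_tendstoD) auto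
  then obtain N where N: "\<And>n. n \<ge> N \<Longrightarrow> X n \<in> S"
    by (auto simp: eventually_sequentially)
  have "(\<lambda>n. \<integral>b. g (X (n + N)) b \<partial>M) \<longlonglongrightarrow> (\<integral>b. l b \<partial>M)"
  proof (rule integral_dominated_convergence[where w=w])
    show "AE b in M. (\<lambda>n. g (X (n + N)) b) \<longlonglongrightarrow> l b"
    proof (intro AE_I2)
      fix b assume "b \<in> space M"
      then have "(\<lambda>n. g (X n) b) \<longlonglongrightarrow> l b"
        using lim Xne Xl unfolding tendsto_at_iff_sequentially comp_def by blast
      then show "(\<lambda>n. g (X (n + N)) b) \<longlonglongrightarrow> l b"
        by (rule LIMSEQ_ignore_initial_segment)
    qed
  qed (use meas meas_l bnd N Xne w in auto)
  then show "((\<lambda>p. \<integral>b. g p b \<partial>M) \<circ> X) \<longlonglongrightarrow> (\<integral>b. l b \<partial>M)"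
    unfolding comp_def by (rule LIMSEQ_offset)
qed

lemma has_real_derivative_integral:
  fixes f f' :: "real \<Rightarrow> 'b \<Rightarrow> real" and w :: "'b \<Rightarrow> real"
  assumes x0: "x0 \<in> {lo<..<hi}"
    and der: "\<And>x b. x \<in> {lo<..<hi} \<Longrightarrow> b \<in> space M \<Longrightarrow>
      ((\<lambda>x. f x b) has_real_derivative f' x b) (at x)"
    and bnd: "\<And>x b. x \<in> {lo<..<hi} \<Longrightarrow> b \<in> space M \<Longrightarrow> \<bar>f' x b\<bar> \<le> w b"
    and w: "integrable M w" and int0: "integrable M (f x0)"
    and meas: "\<And>x. x \<in> {lo<..<hi} \<Longrightarrow> f x \<in> borel_measurable M"
    and meas': "f' x0 \<in> borel_measurable M"
  shows "((\<lambda>x. \<integral>b. f x b \<partial>M) has_real_derivative (\<integral>b. f' x0 b \<partial>M)) (at x0)"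
  unfolding has_field_derivative_iff
proof (rule tendsto_cong[THEN iffD1])
  show "\<forall>\<^sub>F y in at x0. (\<integral>b. (f y b - f x0 b) / (y - x0) \<partial>M)
      = ((\<integral>b. f y b \<partial>M) - (\<integral>b. f x0 b \<partial>M)) / (y - x0)"
    using eventually_at_in_open'[OF open_greaterThanLessThan x0]
    by eventually_elim
       (use integrable_of_has_real_derivative_bounded[OF x0 _ der bnd w int0 meas] int0 in simp)
  show "((\<lambda>y. \<integral>b. (f y b - f x0 b) / (y - x0) \<partial>M) \<longlongrightarrow> (\<integral>b. f' x0 b \<partial>M)) (at x0)"
  proof (rule tendsto_integral_at[OF _ x0 _ _ meas' _ w])
    show "((\<lambda>y. (f y b - f x0 b) / (y - x0)) \<longlongrightarrow> f' x0 b) (at x0)" if "b \<in> space M" for b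
      using der[OF x0 that] unfolding has_field_derivative_iff .
    show "(\<lambda>b. (f y b - f x0 b) / (y - x0)) \<in> borel_measurable M" if "y \<in> {lo<..<hi}" for y
      using meas[OF that] meas[OF x0] by measurable
    show "\<bar>(f y b - f x0 b) / (y - x0)\<bar> \<le> w b"
      if "y \<in> {lo<..<hi}" "y \<noteq> x0" "b \<in> space M" for y b
    proof -
      have "norm (f y b - f x0 b) \<le> w b * norm (y - x0)"
        using der bnd that x0
        by (intro field_differentiable_bound[where S="{lo<..<hi}" and f="\<lambda>x. f x b"])
           (auto intro: has_field_derivative_at_within)
      with that show ?thesis by (simp add: abs_divide divide_le_eq)
    qed
  qed simp
qed

lemma continuous_at_integral:
  fixes g :: "'p::{first_countable_topology, t2_space} \<Rightarrow> 'b \<Rightarrow> real" and w :: "'b \<Rightarrow> real"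
  assumes S: "open S" "p0 \<in> S"
    and cont: "\<And>b. b \<in> space M \<Longrightarrow> continuous (at p0) (\<lambda>p. g p b)"
    and meas: "\<And>p. p \<in> S \<Longrightarrow> g p \<in> borel_measurable M"
    and bnd: "\<And>p b. p \<in> S \<Longrightarrow> b \<in> space M \<Longrightarrow> \<bar>g p b\<bar> \<le> w b"
    and w: "integrable M w"
  shows "continuous (at p0) (\<lambda>p. \<integral>b. g p b \<partial>M)"
  unfolding continuous_at
  using cont meas S bnd w
  by (intro tendsto_integral_at[OF S]) (auto simp: continuous_at)

lemma has_derivative_of_partials:
  fixes F B :: "real \<Rightarrow> real \<Rightarrow> real"
  assumes X: "open X" "x0 \<in> X" and Y: "open Y" "convex Y" "y0 \<in> Y"
    and fx: "((\<lambda>x. F x y0) has_real_derivative A) (at x0)"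
    and fy: "\<And>x y. x \<in> X \<Longrightarrow> y \<in> Y \<Longrightarrow> ((\<lambda>y. F x y) has_real_derivative B x y) (at y)"
    and cont: "continuous (at (x0, y0)) (\<lambda>p. B (fst p) (snd p))"
  shows "((\<lambda>p. F (fst p) (snd p)) has_derivative (\<lambda>(u, v). A * u + B x0 y0 * v)) (at (x0, y0))"
proof -
  have "((\<lambda>(x, y). F x y) has_derivative
      (\<lambda>(tx, ty). A * tx + blinfun_apply (blinfun_mult_right (B x0 y0)) ty)) (at (x0, y0) within X \<times> Y)"
  proof (rule has_derivative_partialsI[where fy="\<lambda>x y. blinfun_mult_right (B x y)"])
    show "((\<lambda>x. F x y0) has_derivative (*) A) (at x0 within X)"
      using fx unfolding has_field_derivative_def by (rule has_derivative_at_withinI)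
    show "((\<lambda>y. F x y) has_derivative blinfun_apply (blinfun_mult_right (B x y))) (at y within Y)"
      if "x \<in> X" "y \<in> Y" for x y
      using fy[OF that] unfolding has_field_derivative_def by (auto intro: has_derivative_at_withinI)
    have "continuous (at (x0, y0)) (\<lambda>p. blinfun_mult_right (B (fst p) (snd p)))"
      by (rule bounded_linear.continuous[OF bounded_linear_blinfun_mult_right cont])
    then show "continuous (at (x0, y0) within X \<times> Y) (\<lambda>(x, y). blinfun_mult_right (B x y))"
      unfolding split_beta' by (rule continuous_at_imp_continuous_within)
  qed (use Y in auto)
  moreover have "at (x0, y0) within X \<times> Y = at (x0, y0)"
    using X Y by (intro at_within_open) (auto intro: open_Times)
  ultimately show ?thesis by (simp add: split_beta')
qed

lemma linear_quotient_estimate: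
  fixes a b h k R :: real
  assumes h: "h \<noteq> 0" and b: "b \<noteq> 0" and R: "0 \<le> R" "R \<le> \<bar>b\<bar> / 2"
    and lin: "\<bar>a * h + b * k\<bar> \<le> R * (\<bar>h\<bar> + \<bar>k\<bar>)"
  shows "\<bar>k / h - (- a / b)\<bar> \<le> R * (1 + (2 * \<bar>a\<bar> + \<bar>b\<bar>) / \<bar>b\<bar>) / \<bar>b\<bar>"
proof -
  define C where "C = (2 * \<bar>a\<bar> + \<bar>b\<bar>) / \<bar>b\<bar>"
  have bpos: "0 < \<bar>b\<bar>" using b by simp
  have "\<bar>b\<bar> * \<bar>k\<bar> \<le> \<bar>a * h + b * k\<bar> + \<bar>a\<bar> * \<bar>h\<bar>"
    by (metis abs_mult abs_triangle_ineq4 add_diff_cancel_left' diff_le_eq)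
  moreover have "R * (\<bar>h\<bar> + \<bar>k\<bar>) \<le> \<bar>b\<bar> / 2 * (\<bar>h\<bar> + \<bar>k\<bar>)"
    using R by (intro mult_right_mono) auto
  ultimately have "\<bar>b\<bar> * \<bar>k\<bar> \<le> (2 * \<bar>a\<bar> + \<bar>b\<bar>) * \<bar>h\<bar>"
    using lin by (simp add: algebra_simps)
  then have kC: "\<bar>k\<bar> \<le> C * \<bar>h\<bar>"
    unfolding C_def using bpos by (simp add: field_simps mult.commute)
  have "\<bar>k / h - (- a / b)\<bar> = \<bar>a * h + b * k\<bar> / (\<bar>b\<bar> * \<bar>h\<bar>)"
    using h b by (simp add: field_simps abs_divide abs_mult[symmetric])
  also have "\<dots> \<le> R * (\<bar>h\<bar> + C * \<bar>h\<bar>) / (\<bar>b\<bar> * \<bar>h\<bar>)"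
    using lin kC R h bpos by (intro divide_right_mono order_trans[OF lin] mult_left_mono) auto
  also have "\<dots> = R * (1 + C) / \<bar>b\<bar>"
    using h bpos by (simp add: field_simps)
  finally show ?thesis unfolding C_def .
qed

lemma isCont_partials:
  fixes H :: "'a::t2_space \<Rightarrow> 'b::t2_space \<Rightarrow> 'c::topological_space"
  assumes "isCont (\<lambda>p. H (fst p) (snd p)) (x, s)"
  shows "isCont (\<lambda>x. H x s) x" and "isCont (\<lambda>s. H x s) s"
proof -
  have "isCont (\<lambda>x. (x, s)) x" "isCont (\<lambda>s. (x, s)) s"
    by (intro continuous_intros)+
  from this[THEN continuous_at_compose, of "\<lambda>p. H (fst p) (snd p)"] assms
  show "isCont (\<lambda>x. H x s) x" "isCont (\<lambda>s. H x s) s"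
    by (auto simp: o_def)
qed

lemma has_real_derivative_partial_snd:
  fixes F :: "real \<Rightarrow> real \<Rightarrow> real"
  assumes "((\<lambda>p. F (fst p) (snd p)) has_derivative (\<lambda>(u, v). a * u + b * v)) (at (x, y))"
  shows "((\<lambda>y. F x y) has_real_derivative b) (at y)"
proof -
  have "((\<lambda>y. (x, y)) has_derivative (\<lambda>h. (0, h))) (at y)"
    by (intro derivative_eq_intros) auto
  from has_derivative_compose[OF this assms] show ?thesis
    unfolding has_field_derivative_def by (simp add: mult.commute[of _ b])
qed

lemma isCont_implicit_root:
  fixes H :: "real \<Rightarrow> real \<Rightarrow> real" and y :: "real \<Rightarrow> real"
  assumes U: "open U" "z \<in> U"
    and root: "\<And>x. x \<in> U \<Longrightarrow> 0 < y x \<and> H x (y x) = 0"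
    and uniq: "\<And>x s. x \<in> U \<Longrightarrow> 0 < s \<Longrightarrow> H x s = 0 \<Longrightarrow> s = y x"
    and cont: "\<And>x s. x \<in> U \<Longrightarrow> 0 < s \<Longrightarrow> isCont (\<lambda>p. H (fst p) (snd p)) (x, s)"
    and Hs: "((\<lambda>s. H z s) has_real_derivative d) (at (y z))" "0 < d"
  shows "isCont y z"
  unfolding isCont_def
proof (rule tendstoI)
  fix e :: real assume e: "0 < e"
  define y0 where "y0 = y z"
  have y0: "0 < y0" "H z y0 = 0" using root U by (auto simp: y0_def)
  obtain d1 where d1: "d1 > 0" "\<And>h. h > 0 \<Longrightarrow> h < d1 \<Longrightarrow> H z y0 < H z (y0 + h)"
    using DERIV_pos_inc_right[OF Hs] unfolding y0_def by blast
  obtain d2 where d2: "d2 > 0" "\<And>h. h > 0 \<Longrightarrow> h < d2 \<Longrightarrow> H z (y0 - h) < H z y0"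
    using DERIV_pos_inc_left[OF Hs] unfolding y0_def by blast
  define t where "t = min (min e y0) (min d1 d2) / 2"
  have t: "0 < t" "t < e" "t < y0" "t < d1" "t < d2"
    using e y0 d1 d2 by (auto simp: t_def)
  \<comment> \<open>\<open>H x\<close> changes sign on \<open>[y0 - t, y0 + t]\<close> for \<open>x\<close> near \<open>z\<close>, so the unique positive root lies there.\<close>
  have "\<forall>\<^sub>F x in at z. 0 < H x (y0 + t)"
    using isCont_partials(1)[OF cont[OF U(2), of "y0 + t"]] d1(2)[of t] t y0
    by (intro order_tendstoD(1)[where a=0]) (auto simp: isCont_def)
  moreover have "\<forall>\<^sub>F x in at z. H x (y0 - t) < 0"
    using isCont_partials(1)[OF cont[OF U(2), of "y0 - t"]] d2(2)[of t] t y0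
    by (intro order_tendstoD(2)[where a=0]) (auto simp: isCont_def)
  moreover have "\<forall>\<^sub>F x in at z. x \<in> U"
    using U by (rule eventually_at_in_open')
  ultimately show "\<forall>\<^sub>F x in at z. dist (y x) (y z) < e"
  proof eventually_elim
    case (elim x)
    have "continuous_on {y0 - t .. y0 + t} (H x)"
      using elim(3) t isCont_partials(2)[OF cont]
      by (intro continuous_at_imp_continuous_on ballI) auto
    then obtain s where s: "y0 - t \<le> s" "s \<le> y0 + t" "H x s = 0"
      using IVT'[of "H x" "y0 - t" 0 "y0 + t"] elim(1,2) t by auto
    then have "s = y x" using uniq[OF elim(3)] t by simp
    then show ?case using s t by (simp add: dist_real_def y0_def abs_le_iff)
  qed
qed

lemma implicit_has_real_derivative:
  fixes H :: "real \<Rightarrow> real \<Rightarrow> real" and y :: "real \<Rightarrow> real"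
  assumes HD: "((\<lambda>p. H (fst p) (snd p)) has_derivative (\<lambda>(u, v). a * u + b * v)) (at (z, y z))"
    and b: "b \<noteq> 0"
    and zero: "\<forall>\<^sub>F x in at z. H x (y x) = 0" and zero0: "H z (y z) = 0"
    and ycont: "isCont y z"
  shows "(y has_real_derivative (- a / b)) (at z)"
proof -
  define y0 where "y0 = y z"
  \<comment> \<open>relative error of the linearisation at \<open>(z, y0)\<close>, evaluated along the graph of \<open>y\<close>\<close>
  define R where "R x = \<bar>H x (y x) - a * (x - z) - b * (y x - y0)\<bar> / norm (x - z, y x - y0)" for x
  have lim: "((\<lambda>p. norm (H (fst p) (snd p) - H z y0 - (\<lambda>(u, v). a * u + b * v) (p - (z, y0)))
      / norm (p - (z, y0))) \<longlongrightarrow> 0) (at (z, y0))"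
    using HD unfolding has_derivative_iff_norm y0_def by simp
  have graph: "filterlim (\<lambda>x. (x, y x)) (at (z, y0)) (at z)"
  proof (rule filterlim_atI)
    show "((\<lambda>x. (x, y x)) \<longlongrightarrow> (z, y0)) (at z)"
      using ycont unfolding y0_def isCont_def by (intro tendsto_Pair tendsto_ident_at) auto
    show "\<forall>\<^sub>F x in at z. (x, y x) \<noteq> (z, y0)"
      unfolding eventually_at_filter by (rule always_eventually) auto
  qed
  have "((\<lambda>x. norm (H x (y x) - H z y0 - (a * (x - z) + b * (y x - y0)))
      / norm (x - z, y x - y0)) \<longlongrightarrow> 0) (at z)"
    using filterlim_compose[OF lim graph] by simp
  then have Rlim: "(R \<longlongrightarrow> 0) (at z)"
    unfolding R_def using zero0 by (simp add: y0_def algebra_simps)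
  have R0: "0 \<le> R x" for x
    unfolding R_def by simp
  define K where "K = (1 + (2 * \<bar>a\<bar> + \<bar>b\<bar>) / \<bar>b\<bar>) / \<bar>b\<bar>"
  have "\<forall>\<^sub>F x in at z. R x < \<bar>b\<bar> / 2"
    using Rlim b by (intro order_tendstoD) auto
  then have bound: "\<forall>\<^sub>F x in at z. norm ((y x - y0) / (x - z) - (- a / b)) \<le> R x * K"
    using zero eventually_neq_at_within[of z z UNIV]
  proof eventually_elim
    case (elim x)
    have "0 < norm (x - z, y x - y0)" using elim by (simp add: zero_prod_def)
    then have "\<bar>a * (x - z) + b * (y x - y0)\<bar> = R x * norm (x - z, y x - y0)"
      using elim by (simp add: R_def abs_minus_commute algebra_simps)
    also have "\<dots> \<le> R x * (\<bar>x - z\<bar> + \<bar>y x - y0\<bar>)"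
      using norm_Pair_le[of "x - z" "y x - y0"] R0 by (intro mult_left_mono) auto
    finally have "\<bar>a * (x - z) + b * (y x - y0)\<bar> \<le> R x * (\<bar>x - z\<bar> + \<bar>y x - y0\<bar>)" .
    then show ?case
      using linear_quotient_estimate[of "x - z" b "R x" a "y x - y0"] elim b R0
      by (simp add: K_def)
  qed
  moreover have "((\<lambda>x. R x * K) \<longlongrightarrow> 0) (at z)"
    using tendsto_mult_right[OF Rlim, of K] by simp
  ultimately have "((\<lambda>x. (y x - y0) / (x - z) - (- a / b)) \<longlongrightarrow> 0) (at z)"
    by (rule Lim_null_comparison)
  then show ?thesis
    unfolding has_field_derivative_iff y0_def by (rule LIM_zero_cancel)
qed

section \<open>The standard normal density and its tail\<close>

abbreviation phi :: "real \<Rightarrow> real" where "phi \<equiv> std_normal_density"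

lemma phi_eq: "phi x = exp (- x\<^sup>2 / 2) / sqrt (2 * pi)"
  by (simp add: std_normal_density_def)

lemma phi_pos: "0 < phi x"
  by (simp add: normal_density_pos)

lemma phi_minus: "phi (- x) = phi x"
  by (simp add: phi_eq)

lemma phi_le_1: "phi x \<le> 1"
proof -
  have "exp (- x\<^sup>2 / 2) \<le> 1" by simp
  also have "1 \<le> sqrt (2 * pi)" using pi_gt3 by simp
  finally show ?thesis unfolding phi_eq by (simp add: divide_le_eq)
qed

lemma phi_le_phi_of_sq_le: "y\<^sup>2 \<le> x\<^sup>2 \<Longrightarrow> phi x \<le> phi y"
  unfolding phi_eq by (intro divide_right_mono) auto

lemma phi_has_real_derivative: "(phi has_real_derivative (- x * phi x)) (at x)"
  unfolding phi_eq[abs_def] by (auto intro!: derivative_eq_intros simp: field_simps)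

lemma has_real_derivative_phi [derivative_intros]:
  "(f has_real_derivative d) (at x within S) \<Longrightarrow>
   ((\<lambda>x. phi (f x)) has_real_derivative (- f x * phi (f x) * d)) (at x within S)"
  by (rule DERIV_chain2[OF phi_has_real_derivative])

lemma isCont_phi: "isCont phi x"
  using phi_has_real_derivative DERIV_isCont by blast

lemma continuous_phi [continuous_intros]: "continuous F f \<Longrightarrow> continuous F (\<lambda>x. phi (f x))"
  unfolding continuous_def by (rule isCont_tendsto_compose[OF isCont_phi])

lemma integrable_phi_moment: "integrable lborel (\<lambda>x. x ^ k * phi x)"
  using integrable_std_normal_moment[of k] by (simp add: mult.commute)

lemma tendsto_phi_at_top: "(phi \<longlongrightarrow> 0) at_top"
  unfolding std_normal_density_def by real_asymp

lemma tendsto_x_phi_at_top: "((\<lambda>x. x * phi x) \<longlongrightarrow> 0) at_top"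
  unfolding std_normal_density_def by real_asymp

lemma tendsto_antiderivative_at_top:
  fixes f F :: "real \<Rightarrow> real"
  assumes int: "integrable lborel f" and cont: "\<And>x. isCont f x"
    and der: "\<And>x. (F has_real_derivative f x) (at x)"
  shows "(F \<longlongrightarrow> F a + (\<integral>x. indicator {a..} x * f x \<partial>lborel)) at_top"
proof -
  have "integrable lborel (\<lambda>x. indicator {a..} x * f x)"
    using int by (intro integrable_mult_indicator[where 'b=real, simplified]) auto
  then have lim: "((\<lambda>y. \<integral>x. indicator {..y} x *\<^sub>R (indicator {a..} x * f x) \<partial>lborel) \<longlongrightarrow>
            (\<integral>x. indicator {a..} x * f x \<partial>lborel)) at_top"
    by (intro tendsto_integral_at_top) auto
  have ev: "\<forall>\<^sub>F y in at_top. (\<integral>x. indicator {..y} x *\<^sub>R (indicator {a..} x * f x) \<partial>lborel) = F y - F a"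
    using eventually_ge_at_top[of a]
  proof eventually_elim
    case (elim y)
    have "(\<integral>x. indicator {..y} x *\<^sub>R (indicator {a..} x * f x) \<partial>lborel)
        = (\<integral>x. indicator {a..y} x *\<^sub>R f x \<partial>lborel)"
      by (intro Bochner_Integration.integral_cong) (auto split: split_indicator)
    also have "\<dots> = F y - F a"
      using elim
      by (intro integral_FTC_atLeastAtMost)
         (auto intro!: continuous_at_imp_continuous_on cont
               simp: has_real_derivative_iff_has_vector_derivative[symmetric]
               intro: DERIV_subset[OF der])
    finally show ?case .
  qed
  have "((\<lambda>y. F y - F a) \<longlongrightarrow> (\<integral>x. indicator {a..} x * f x \<partial>lborel)) at_top"
    using tendsto_cong[OF ev] lim by simp
  then have "((\<lambda>y. (F y - F a) + F a) \<longlongrightarrow> (\<integral>x. indicator {a..} x * f x \<partial>lborel) + F a) at_top"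
    by (intro tendsto_intros)
  then show ?thesis by (simp add: add.commute)
qed

lemma has_bochner_integral_tail_FTC:
  fixes f F :: "real \<Rightarrow> real"
  assumes int: "integrable lborel f" and cont: "\<And>x. isCont f x"
    and der: "\<And>x. (F has_real_derivative f x) (at x)"
    and lim: "(F \<longlongrightarrow> L) at_top"
  shows "has_bochner_integral lborel (\<lambda>x. indicator {a..} x * f x) (L - F a)"
proof -
  have "L = F a + (\<integral>x. indicator {a..} x * f x \<partial>lborel)"
    using tendsto_unique[OF _ lim tendsto_antiderivative_at_top[OF int cont der]] by simp
  moreover have "integrable lborel (\<lambda>x. indicator {a..} x * f x)"
    using int by (intro integrable_mult_indicator[where 'b=real, simplified]) auto
  ultimately show ?thesis by (simp add: has_bochner_integral_iff)
qed

definition gauss_tail :: "real \<Rightarrow> real" where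
  "gauss_tail a = (\<integral>x. indicator {a..} x * phi x \<partial>lborel)"

lemma gauss_tail_eq_antiderivative:
  "\<exists>F L. (\<forall>x. (F has_real_derivative phi x) (at x)) \<and> (F \<longlongrightarrow> L) at_top \<and>
     (\<forall>a. gauss_tail a = L - F a)"
proof -
  obtain F where "\<And>x::real. (F has_vector_derivative phi x) (at x)"
    using einterval_antiderivative[of "-\<infinity>" "\<infinity>" phi] isCont_phi by auto
  then have F: "\<And>x. (F has_real_derivative phi x) (at x)"
    by (simp add: has_real_derivative_iff_has_vector_derivative)
  have int: "integrable lborel phi"
    using integrable_phi_moment[of 0] by simp
  define L where "L = F 0 + (\<integral>x. indicator {0..} x * phi x \<partial>lborel)"
  have L: "(F \<longlongrightarrow> L) at_top"
    unfolding L_def by (rule tendsto_antiderivative_at_top[OF int isCont_phi F])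
  have "gauss_tail a = L - F a" for a
    unfolding gauss_tail_def using has_bochner_integral_tail_FTC[OF int isCont_phi F L]
    by (simp add: has_bochner_integral_iff)
  with F L show ?thesis by blast
qed

lemma gauss_tail_has_real_derivative: "(gauss_tail has_real_derivative (- phi x)) (at x)"
proof -
  obtain F L where F: "\<And>x. (F has_real_derivative phi x) (at x)"
    and "(F \<longlongrightarrow> L) at_top" and Q: "\<And>a. gauss_tail a = L - F a"
    using gauss_tail_eq_antiderivative by blast
  have "((\<lambda>a. L - F a) has_real_derivative (- phi x)) (at x)"
    by (auto intro!: derivative_eq_intros F)
  moreover have "gauss_tail = (\<lambda>a. L - F a)"
    using Q by (simp add: fun_eq_iff)
  ultimately show ?thesis by simp
qed

lemma has_real_derivative_gauss_tail [derivative_intros]: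
  "(f has_real_derivative d) (at x within S) \<Longrightarrow>
   ((\<lambda>x. gauss_tail (f x)) has_real_derivative (- phi (f x) * d)) (at x within S)"
  by (rule DERIV_chain2[OF gauss_tail_has_real_derivative])

lemma isCont_gauss_tail: "isCont gauss_tail x"
  using gauss_tail_has_real_derivative DERIV_isCont by blast

lemma continuous_gauss_tail [continuous_intros]:
  "continuous F f \<Longrightarrow> continuous F (\<lambda>x. gauss_tail (f x))"
  unfolding continuous_def by (rule isCont_tendsto_compose[OF isCont_gauss_tail])

lemma borel_measurable_gauss_tail [measurable]: "gauss_tail \<in> borel_measurable borel"
  by (intro borel_measurable_continuous_onI continuous_at_imp_continuous_on ballI isCont_gauss_tail)

lemma tendsto_gauss_tail_at_top: "(gauss_tail \<longlongrightarrow> 0) at_top"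
proof -
  obtain F L where "\<And>x. (F has_real_derivative phi x) (at x)"
    and FL: "(F \<longlongrightarrow> L) at_top" and Q: "\<And>a. gauss_tail a = L - F a"
    using gauss_tail_eq_antiderivative by blast
  have "((\<lambda>a. L - F a) \<longlongrightarrow> L - L) at_top"
    by (intro tendsto_intros FL)
  moreover have "gauss_tail = (\<lambda>a. L - F a)"
    using Q by (simp add: fun_eq_iff)
  ultimately show ?thesis by simp
qed

lemma has_bochner_integral_gauss_tail:
  "has_bochner_integral lborel (\<lambda>x. indicator {a..} x * phi x) (gauss_tail a)"
proof -
  have "integrable lborel (\<lambda>x. indicator {a..} x * phi x)"
    using integrable_phi_moment[of 0]
    by (intro integrable_mult_indicator[where 'b=real, simplified]) auto
  then show ?thesis by (simp add: has_bochner_integral_iff gauss_tail_def)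
qed

lemma has_bochner_integral_gauss_tail_moment1:
  "has_bochner_integral lborel (\<lambda>x. indicator {a..} x * (x * phi x)) (phi a)"
proof -
  have der: "((\<lambda>x. - phi x) has_real_derivative x * phi x) (at x)" for x
    using DERIV_minus[OF phi_has_real_derivative[of x]] by simp
  have cont: "isCont (\<lambda>x. x * phi x) x" for x
    by (intro continuous_intros isCont_phi)
  have "has_bochner_integral lborel (\<lambda>x. indicator {a..} x * (x * phi x)) (- 0 - (- phi a))"
    using integrable_phi_moment[of 1]
    by (intro has_bochner_integral_tail_FTC[OF _ cont der] tendsto_minus tendsto_phi_at_top) simp
  then show ?thesis by simp
qed

lemma has_bochner_integral_gauss_tail_moment2:
  "has_bochner_integral lborel (\<lambda>x. indicator {a..} x * (x\<^sup>2 * phi x)) (gauss_tail a + a * phi a)"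
proof -
  have lim: "((\<lambda>x. - (x * phi x) - gauss_tail x) \<longlongrightarrow> - 0 - 0) at_top"
    by (intro tendsto_intros tendsto_x_phi_at_top tendsto_gauss_tail_at_top)
  have der: "((\<lambda>x. - (x * phi x) - gauss_tail x) has_real_derivative x\<^sup>2 * phi x) (at x)" for x
    by (auto intro!: derivative_eq_intros gauss_tail_has_real_derivative simp: power2_eq_square)
  have cont: "isCont (\<lambda>x. x\<^sup>2 * phi x) x" for x
    by (intro continuous_intros isCont_phi)
  have "has_bochner_integral lborel (\<lambda>x. indicator {a..} x * (x\<^sup>2 * phi x))
      ((- 0 - 0) - (- (a * phi a) - gauss_tail a))"
    by (rule has_bochner_integral_tail_FTC[OF integrable_phi_moment[of 2] cont der lim])
  then show ?thesis by simp
qed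

lemma has_bochner_integral_phi_moments:
  "has_bochner_integral lborel phi 1"
  "has_bochner_integral lborel (\<lambda>x. x * phi x) 0"
  "has_bochner_integral lborel (\<lambda>x. x\<^sup>2 * phi x) 1"
  using integrable_phi_moment[of 0] integrable_phi_moment[of 1] integrable_phi_moment[of 2]
    integral_std_normal_moment_odd[of 0] integral_std_normal_moment_even[of 1]
  by (simp_all add: has_bochner_integral_iff mult.commute)

lemma gauss_tail_nonneg: "0 \<le> gauss_tail a"
  unfolding gauss_tail_def by (intro integral_nonneg_AE) (auto split: split_indicator)

lemma gauss_tail_antimono: "a \<le> b \<Longrightarrow> gauss_tail b \<le> gauss_tail a"
  using has_bochner_integral_gauss_tail[of a] has_bochner_integral_gauss_tail[of b]
  unfolding gauss_tail_def
  by (intro integral_mono) (auto simp: has_bochner_integral_iff split: split_indicator)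

lemma gauss_tail_le_1: "gauss_tail a \<le> 1"
proof -
  have "gauss_tail a \<le> (\<integral>x. phi x \<partial>lborel)"
    using has_bochner_integral_gauss_tail[of a] has_bochner_integral_phi_moments(1)
    unfolding gauss_tail_def
    by (intro integral_mono) (auto simp: has_bochner_integral_iff split: split_indicator)
  then show ?thesis by simp
qed

section \<open>Soft thresholding against Gaussian noise\<close>

text \<open>For \<open>Z \<sim> N(0,1)\<close>: \<open>exceed_prob m c = P(\<bar>m + Z\<bar> > c)\<close>, \<open>exceed_density m c\<close> is the density
  of \<open>\<bar>m + Z\<bar>\<close> at \<open>c\<close>, and \<open>soft_risk m c = E[(\<eta>(m + Z; c) - m)\<^sup>2]\<close>.\<close>

definition exceed_prob :: "real \<Rightarrow> real \<Rightarrow> real" where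
  "exceed_prob m c = gauss_tail (c - m) + 1 - gauss_tail (- c - m)"

definition exceed_density :: "real \<Rightarrow> real \<Rightarrow> real" where
  "exceed_density m c = phi (c - m) + phi (c + m)"

definition soft_risk :: "real \<Rightarrow> real \<Rightarrow> real" where
  "soft_risk m c = (1 + c\<^sup>2) * exceed_prob m c - c * exceed_density m c
     - m * (phi (c - m) - phi (c + m)) + m\<^sup>2 * (1 - exceed_prob m c)"

lemma prob_space_gauss01: "prob_space gauss01"
  unfolding gauss01_def using prob_space_normal_density[of 1 0] by simp

lemma sets_gauss01 [measurable_cong]: "sets gauss01 = sets borel"
  by (simp add: gauss01_def)

lemma space_gauss01: "space gauss01 = UNIV"
  by (simp add: gauss01_def)

lemma integral_gauss01:
  assumes [measurable]: "f \<in> borel_measurable borel"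
  shows "integral\<^sup>L gauss01 f = (\<integral>x. phi x * f x \<partial>lborel)"
  unfolding gauss01_def by (subst integral_density) auto

lemma integrable_gauss01_quadratic: "integrable gauss01 (\<lambda>z. \<alpha> + \<beta> * z\<^sup>2)"
proof -
  have "integrable lborel (\<lambda>z. \<alpha> * phi z + \<beta> * (z\<^sup>2 * phi z))"
    using integrable_phi_moment[of 0] integrable_phi_moment[of 2] by auto
  then have "integrable lborel (\<lambda>z. phi z * (\<alpha> + \<beta> * z\<^sup>2))"
    by (simp add: algebra_simps)
  then show ?thesis
    unfolding gauss01_def by (subst integrable_density) auto
qed

lemma borel_measurable_soft_thresh [measurable]:
  "(\<lambda>x. soft_thresh (f x) (g x)) \<in> borel_measurable M"
  if [measurable]: "f \<in> borel_measurable M" "g \<in> borel_measurable M"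
  unfolding soft_thresh_def by measurable

lemma soft_thresh_scale:
  assumes "0 < s"
  shows "soft_thresh (s * a) (s * t) = s * soft_thresh a t"
proof -
  have "max (s * \<bar>a\<bar> - s * t) 0 = s * max (\<bar>a\<bar> - t) 0"
    using max_mult_distrib_left[of s "\<bar>a\<bar> - t" 0] assms by (simp add: right_diff_distrib)
  then show ?thesis
    using assms by (simp add: soft_thresh_def abs_mult sgn_mult)
qed

lemma soft_thresh_error_sq_le:
  assumes "0 \<le> t"
  shows "(soft_thresh (b + y) t - b)\<^sup>2 \<le> 2 * (t\<^sup>2 + y\<^sup>2)"
proof -
  have "\<bar>soft_thresh (b + y) t - (b + y)\<bar> \<le> t"
    using assms by (auto simp: soft_thresh_def max_def abs_if sgn_if)
  then have "\<bar>soft_thresh (b + y) t - b\<bar> \<le> t + \<bar>y\<bar>"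
    by linarith
  then have "(soft_thresh (b + y) t - b)\<^sup>2 \<le> (t + \<bar>y\<bar>)\<^sup>2"
    by (metis abs_ge_zero order_trans power2_abs power_mono)
  also have "\<dots> \<le> 2 * (t\<^sup>2 + y\<^sup>2)"
    using zero_le_power2[of "t - \<bar>y\<bar>"] by (simp add: power2_eq_square algebra_simps)
  finally show ?thesis .
qed

lemma soft_thresh_error_sq_split:
  assumes "0 \<le> c"
  shows "(soft_thresh (m + z) c - m)\<^sup>2 =
     indicator {c - m..} z * (z\<^sup>2 - 2 * c * z + c\<^sup>2)
   + (1 - indicator {- c - m..} z) * (z\<^sup>2 + 2 * c * z + c\<^sup>2)
   + (indicator {- c - m..} z - indicator {c - m..} z) * m\<^sup>2"
  using assms
  by (auto simp: soft_thresh_def indicator_def max_def abs_if sgn_if power2_eq_square algebra_simps)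

lemma integral_gauss01_soft_thresh_error:
  assumes c: "0 \<le> c"
  shows "(\<integral>z. (soft_thresh (m + z) c - m)\<^sup>2 \<partial>gauss01) = soft_risk m c"
proof -
  define a where "a = c - m"
  define a' where "a' = - c - m"
  note tail = has_bochner_integral_gauss_tail has_bochner_integral_gauss_tail_moment1
    has_bochner_integral_gauss_tail_moment2 has_bochner_integral_phi_moments
  let ?g = "\<lambda>z. indicator {a..} z * (z\<^sup>2 * phi z) - (2*c) * (indicator {a..} z * (z * phi z))
      + c\<^sup>2 * (indicator {a..} z * phi z)
      + z\<^sup>2 * phi z - indicator {a'..} z * (z\<^sup>2 * phi z)
      + (2*c) * (z * phi z) - (2*c) * (indicator {a'..} z * (z * phi z))
      + c\<^sup>2 * phi z - c\<^sup>2 * (indicator {a'..} z * phi z)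
      + m\<^sup>2 * (indicator {a'..} z * phi z) - m\<^sup>2 * (indicator {a..} z * phi z)"
  have "(\<integral>z. (soft_thresh (m + z) c - m)\<^sup>2 \<partial>gauss01) = (\<integral>z. phi z * (soft_thresh (m + z) c - m)\<^sup>2 \<partial>lborel)"
    by (rule integral_gauss01) simp
  also have "\<dots> = integral\<^sup>L lborel ?g"
    unfolding soft_thresh_error_sq_split[OF c] a_def a'_def
    by (intro Bochner_Integration.integral_cong refl) (simp add: algebra_simps)
  also have "\<dots> = (gauss_tail a + a * phi a) - (2*c) * phi a + c\<^sup>2 * gauss_tail a
     + 1 - (gauss_tail a' + a' * phi a')
     + (2*c) * 0 - (2*c) * phi a'
     + c\<^sup>2 * 1 - c\<^sup>2 * gauss_tail a'
     + m\<^sup>2 * gauss_tail a' - m\<^sup>2 * gauss_tail a"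
    by (intro has_bochner_integral_integral_eq has_bochner_integral_add has_bochner_integral_diff
        has_bochner_integral_mult_right tail)
  also have "\<dots> = soft_risk m c"
    using phi_minus[of "c + m"]
    by (simp add: soft_risk_def exceed_prob_def exceed_density_def a_def a'_def
        power2_eq_square algebra_simps)
  finally show ?thesis .
qed

lemma measure_gauss01_exceeds:
  assumes c: "0 \<le> c"
  shows "measure gauss01 {z. c < \<bar>m + z\<bar>} = exceed_prob m c"
proof -
  define a where "a = c - m"
  define a' where "a' = - c - m"
  have hb: "has_bochner_integral lborel
      (\<lambda>z. phi z - indicator {a'..} z * phi z + indicator {a..} z * phi z) (1 - gauss_tail a' + gauss_tail a)"
    by (intro has_bochner_integral_add has_bochner_integral_diff has_bochner_integral_gauss_tail
        has_bochner_integral_phi_moments)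
  have ae: "AE z in lborel. phi z * indicator {z. c < \<bar>m + z\<bar>} z =
      phi z - indicator {a'..} z * phi z + indicator {a..} z * phi z"
    using AE_lborel_singleton[of a]
    by eventually_elim (use c in \<open>auto simp: a_def a'_def indicator_def abs_if\<close>)
  have "measure gauss01 {z. c < \<bar>m + z\<bar>} = (\<integral>z. indicator {z. c < \<bar>m + z\<bar>} z \<partial>gauss01)"
    by simp
  also have "\<dots> = (\<integral>z. phi z * indicator {z. c < \<bar>m + z\<bar>} z \<partial>lborel)"
    by (rule integral_gauss01) simp
  also have "\<dots> = 1 - gauss_tail a' + gauss_tail a"
    using integral_cong_AE[OF _ _ ae] hb by (simp add: has_bochner_integral_iff)
  finally show ?thesis
    by (simp add: exceed_prob_def a_def a'_def)
qed

context real_distribution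
begin

lemma lasso_mse_eq:
  assumes c: "0 \<le> c" and s: "0 < s"
  shows "lasso_mse M c s = (\<integral>b. s\<^sup>2 * soft_risk (b / s) c \<partial>M)"
proof -
  interpret G: prob_space gauss01 by (rule prob_space_gauss01)
  interpret MG: pair_prob_space M gauss01 by unfold_locales
  let ?f = "\<lambda>bz. (soft_thresh (fst bz + s * snd bz) (c * s) - fst bz)\<^sup>2"
  let ?w = "\<lambda>z. 2 * (c * s)\<^sup>2 + 2 * s\<^sup>2 * z\<^sup>2"
  have bound: "?f (b, z) \<le> ?w z" for b z
    using soft_thresh_error_sq_le[of "c * s" b "s * z"] c s by (simp add: algebra_simps power_mult_distrib)
  have inner: "(\<integral>z. ?f (b, z) \<partial>gauss01) = s\<^sup>2 * soft_risk (b / s) c" for b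
  proof -
    have "?f (b, z) = s\<^sup>2 * (soft_thresh (b / s + z) c - b / s)\<^sup>2" for z
    proof -
      have "b + s * z = s * (b / s + z)" using s by (simp add: distrib_left)
      then have "soft_thresh (b + s * z) (c * s) - b = s * (soft_thresh (b / s + z) c - b / s)"
        using soft_thresh_scale[OF s, of "b / s + z" c] s by (simp add: mult.commute right_diff_distrib)
      then show ?thesis by (simp add: power_mult_distrib)
    qed
    then show ?thesis
      using integral_gauss01_soft_thresh_error[OF c, of "b / s"] by simp
  qed
  have int_inner: "integrable gauss01 (\<lambda>z. ?f (b, z))" for b
    by (rule Bochner_Integration.integrable_bound[OF integrable_gauss01_quadratic[of "2 * (c * s)\<^sup>2" "2 * s\<^sup>2"]])
       (use bound in auto)
  have intf: "integrable (M \<Otimes>\<^sub>M gauss01) ?f"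
  proof (rule MG.Fubini_integrable)
    show "integrable M (\<lambda>b. \<integral>z. norm (?f (b, z)) \<partial>gauss01)"
    proof (rule Bochner_Integration.integrable_bound[OF integrable_const[of "\<integral>z. ?w z \<partial>gauss01"]])
      show "AE b in M. norm (\<integral>z. norm (?f (b, z)) \<partial>gauss01) \<le> norm (\<integral>z. ?w z \<partial>gauss01)"
        using bound int_inner integrable_gauss01_quadratic[of "2 * (c * s)\<^sup>2" "2 * s\<^sup>2"]
        by (intro AE_I2) (auto intro!: integral_mono integral_nonneg_AE)
    qed measurable
  qed (use int_inner in \<open>auto\<close>)
  have "lasso_mse M c s = (\<integral>b. (\<integral>z. ?f (b, z) \<partial>gauss01) \<partial>M)"
    unfolding lasso_mse_def BZ_law_def using MG.integral_fst'[OF intf] by simp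
  then show ?thesis
    using inner by simp
qed

lemma lasso_prob_eq:
  assumes c: "0 \<le> c" and s: "0 < s"
  shows "lasso_prob M c s = (\<integral>b. exceed_prob (b / s) c \<partial>M)"
proof -
  interpret G: prob_space gauss01 by (rule prob_space_gauss01)
  interpret MG: pair_prob_space M gauss01 by unfold_locales
  define A where "A = {bz \<in> space (M \<Otimes>\<^sub>M gauss01). c * s < \<bar>fst bz + s * snd bz\<bar>}"
  have A [measurable]: "A \<in> sets (M \<Otimes>\<^sub>M gauss01)"
    unfolding A_def by measurable
  have slice: "{z. c * s < \<bar>b + s * z\<bar>} = {z. c < \<bar>b / s + z\<bar>}" for b
  proof -
    have "\<bar>b + s * z\<bar> = s * \<bar>b / s + z\<bar>" for z
    proof -
      have "b + s * z = s * (b / s + z)" using s by (simp add: distrib_left)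
      then show ?thesis using s by (simp add: abs_mult)
    qed
    then show ?thesis using s by auto
  qed
  have "lasso_prob M c s = integral\<^sup>L (M \<Otimes>\<^sub>M gauss01) (indicator A)"
    unfolding lasso_prob_def BZ_law_def A_def[symmetric]
    using A by (simp add: Int_absorb2 sets.sets_into_space)
  also have "\<dots> = (\<integral>b. (\<integral>z. indicator A (b, z) \<partial>gauss01) \<partial>M)"
  proof -
    have "integrable (M \<Otimes>\<^sub>M gauss01) (indicator A :: _ \<Rightarrow> real)"
      using A by (simp add: integrable_indicator_iff Int_absorb2 sets.sets_into_space
          MG.P.emeasure_finite less_top[symmetric])
    then show ?thesis by (rule MG.integral_fst'[symmetric])
  qed
  also have "\<dots> = (\<integral>b. measure gauss01 {z. c * s < \<bar>b + s * z\<bar>} \<partial>M)"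
  proof (intro Bochner_Integration.integral_cong refl)
    fix b
    have "(\<integral>z. (indicator A (b, z) :: real) \<partial>gauss01) = (\<integral>z. indicator {z. c * s < \<bar>b + s * z\<bar>} z \<partial>gauss01)"
      by (intro Bochner_Integration.integral_cong refl)
         (auto simp: A_def space_pair_measure space_gauss01 indicator_def)
    then show "(\<integral>z. indicator A (b, z) \<partial>gauss01) = measure gauss01 {z. c * s < \<bar>b + s * z\<bar>}"
      by simp
  qed
  also have "\<dots> = (\<integral>b. exceed_prob (b / s) c \<partial>M)"
    unfolding slice measure_gauss01_exceeds[OF c] ..
  finally show ?thesis .
qed

end

lemma borel_measurable_exceed_prob [measurable]:
  "(\<lambda>x. exceed_prob (f x) (g x)) \<in> borel_measurable M"
  if [measurable]: "f \<in> borel_measurable M" "g \<in> borel_measurable M"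
  unfolding exceed_prob_def by measurable

lemma borel_measurable_exceed_density [measurable]:
  "(\<lambda>x. exceed_density (f x) (g x)) \<in> borel_measurable M"
  if [measurable]: "f \<in> borel_measurable M" "g \<in> borel_measurable M"
  unfolding exceed_density_def by measurable

lemma borel_measurable_soft_risk [measurable]:
  "(\<lambda>x. soft_risk (f x) (g x)) \<in> borel_measurable M"
  if [measurable]: "f \<in> borel_measurable M" "g \<in> borel_measurable M"
  unfolding soft_risk_def by measurable

lemma exceed_prob_nonneg: "0 \<le> exceed_prob m c"
  unfolding exceed_prob_def using gauss_tail_nonneg[of "c - m"] gauss_tail_le_1[of "- c - m"]
  by linarith

lemma exceed_prob_le_1: "0 \<le> c \<Longrightarrow> exceed_prob m c \<le> 1"
  unfolding exceed_prob_def using gauss_tail_antimono[of "- c - m" "c - m"] by simp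

lemma exceed_density_nonneg: "0 \<le> exceed_density m c"
  unfolding exceed_density_def using phi_pos[of "c - m"] phi_pos[of "c + m"] by simp

lemma exceed_density_le_2: "exceed_density m c \<le> 2"
  unfolding exceed_density_def using phi_le_1[of "c - m"] phi_le_1[of "c + m"] by simp

lemma phi_skew_nonneg:
  assumes "0 \<le> c"
  shows "0 \<le> m * (phi (c - m) - phi (c + m))"
proof (cases "0 \<le> m")
  case True
  then have "(c - m)\<^sup>2 \<le> (c + m)\<^sup>2"
    using assms by (simp add: power2_eq_square algebra_simps)
  then have "phi (c + m) \<le> phi (c - m)" by (rule phi_le_phi_of_sq_le)
  with True show ?thesis by simp
next
  case False
  then have "(c + m)\<^sup>2 \<le> (c - m)\<^sup>2"
    using assms mult_nonneg_nonpos[of c m] by (simp add: power2_eq_square algebra_simps)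
  then have "phi (c - m) \<le> phi (c + m)" by (rule phi_le_phi_of_sq_le)
  with False show ?thesis by (simp add: mult_nonpos_nonpos)
qed

lemma exceed_prob_has_real_derivative_c:
  "((\<lambda>c. exceed_prob m c) has_real_derivative - exceed_density m c) (at c)"
  unfolding exceed_prob_def exceed_density_def
  by (auto intro!: derivative_eq_intros simp: phi_minus[of "c + m", symmetric])

lemma exceed_prob_has_real_derivative_m:
  "((\<lambda>m. exceed_prob m c) has_real_derivative phi (c - m) - phi (c + m)) (at m)"
  unfolding exceed_prob_def
  by (auto intro!: derivative_eq_intros simp: phi_minus[of "c + m", symmetric])

lemma soft_risk_has_real_derivative_c:
  "((\<lambda>c. soft_risk m c) has_real_derivative 2 * c * exceed_prob m c - 2 * exceed_density m c) (at c)"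
  unfolding soft_risk_def exceed_prob_def exceed_density_def
  by (auto intro!: derivative_eq_intros simp: phi_minus[of "c + m", symmetric])
     (simp add: algebra_simps power2_eq_square)

lemma soft_risk_has_real_derivative_m:
  "((\<lambda>m. soft_risk m c) has_real_derivative 2 * m * (1 - exceed_prob m c)) (at m)"
  unfolding soft_risk_def exceed_prob_def exceed_density_def
  by (auto intro!: derivative_eq_intros simp: phi_minus[of "c + m", symmetric])
     (simp add: algebra_simps power2_eq_square)

lemma divide_has_real_derivative_denominator:
  "s \<noteq> 0 \<Longrightarrow> ((\<lambda>s. b / s) has_real_derivative - (1 / s) * (b / s)) (at s)"
  by (auto intro!: derivative_eq_intros simp: power2_eq_square field_simps)

lemma exceed_prob_has_real_derivative_scale:
  assumes "s \<noteq> 0"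
  shows "((\<lambda>s. exceed_prob (b / s) c) has_real_derivative
     - (1 / s) * ((b / s) * (phi (c - b / s) - phi (c + b / s)))) (at s)"
  using DERIV_chain2[OF exceed_prob_has_real_derivative_m divide_has_real_derivative_denominator[OF assms]]
  by (simp add: divide_inverse algebra_simps)

lemma soft_risk_has_real_derivative_scale:
  assumes "s \<noteq> 0"
  shows "((\<lambda>s. soft_risk (b / s) c) has_real_derivative
     - (2 / s) * ((b / s)\<^sup>2 * (1 - exceed_prob (b / s) c))) (at s)"
proof -
  have "2 * (b / s) * (1 - exceed_prob (b / s) c) * (- (1 / s) * (b / s))
      = - (2 / s) * ((b / s)\<^sup>2 * (1 - exceed_prob (b / s) c))"
    by (simp add: power2_eq_square divide_inverse algebra_simps)
  then show ?thesis
    by (rule DERIV_cong[OF DERIV_chain2[OF soft_risk_has_real_derivative_m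
          divide_has_real_derivative_denominator[OF assms]]])
qed

lemma abs_le_1_plus_sq: "\<bar>m\<bar> \<le> 1 + (m::real)\<^sup>2"
  using zero_le_power2[of "\<bar>m\<bar> - 1"] by (simp add: power2_eq_square algebra_simps)

lemma abs_phi_skew_le: "\<bar>m * (phi (c - m) - phi (c + m))\<bar> \<le> 1 + m\<^sup>2"
proof -
  have "\<bar>phi (c - m) - phi (c + m)\<bar> \<le> 1"
    using phi_pos[of "c - m"] phi_le_1[of "c - m"] phi_pos[of "c + m"] phi_le_1[of "c + m"] by simp
  then have "\<bar>m * (phi (c - m) - phi (c + m))\<bar> \<le> \<bar>m\<bar>"
    by (simp add: abs_mult mult_left_le)
  then show ?thesis using abs_le_1_plus_sq[of m] by linarith
qed

lemma abs_deadzone_le: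
  assumes "0 \<le> c"
  shows "\<bar>m\<^sup>2 * (1 - exceed_prob m c)\<bar> \<le> 1 + m\<^sup>2"
proof -
  have p: "0 \<le> 1 - exceed_prob m c" "1 - exceed_prob m c \<le> 1"
    using exceed_prob_nonneg[of m c] exceed_prob_le_1[OF assms, of m] by auto
  then have "m\<^sup>2 * (1 - exceed_prob m c) \<le> m\<^sup>2"
    by (intro mult_left_le) auto
  with p show ?thesis by simp
qed

lemma abs_soft_risk_le:
  assumes "0 \<le> c"
  shows "\<bar>soft_risk m c\<bar> \<le> (c\<^sup>2 + 2 * c + 3) * (1 + m\<^sup>2)"
proof -
  have "\<bar>(1 + c\<^sup>2) * exceed_prob m c\<bar> \<le> 1 + c\<^sup>2"
    using exceed_prob_nonneg[of m c] exceed_prob_le_1[OF assms, of m]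
    by (simp add: abs_mult mult_left_le)
  moreover have "\<bar>c * exceed_density m c\<bar> \<le> 2 * c"
    using assms exceed_density_nonneg[of m c] mult_left_mono[OF exceed_density_le_2 assms, of m]
    by (simp add: abs_mult mult.commute)
  ultimately have "\<bar>soft_risk m c\<bar> \<le> (1 + c\<^sup>2) + 2 * c + (1 + m\<^sup>2) + (1 + m\<^sup>2)"
    unfolding soft_risk_def using abs_phi_skew_le[of m c] abs_deadzone_le[OF assms, of m]
    by (simp only: abs_le_iff) linarith
  also have "\<dots> \<le> (c\<^sup>2 + 2 * c + 3) * (1 + m\<^sup>2)"
    using assms zero_le_power2[of m] mult_nonneg_nonneg[of "c\<^sup>2 + 2 * c + 1" "m\<^sup>2"]
    by (simp add: algebra_simps)
  finally show ?thesis .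
qed

lemma abs_soft_risk_derivative_c_le:
  assumes "0 \<le> c"
  shows "\<bar>2 * c * exceed_prob m c - 2 * exceed_density m c\<bar> \<le> 2 * c + 4"
proof -
  have "0 \<le> 2 * c * exceed_prob m c" "2 * c * exceed_prob m c \<le> 2 * c"
    using assms exceed_prob_nonneg[of m c] mult_left_le[OF exceed_prob_le_1[OF assms], of "2 * c" m]
    by auto
  then show ?thesis
    using exceed_density_nonneg[of m c] exceed_density_le_2[of m c] by (simp only: abs_le_iff) linarith
qed

lemma one_plus_sq_divide_le:
  fixes b s s1 :: real
  assumes "0 < s1" "s1 \<le> s"
  shows "1 + (b / s)\<^sup>2 \<le> (1 + 1 / s1\<^sup>2) * (1 + b\<^sup>2)"
proof -
  have "\<bar>b / s\<bar> \<le> \<bar>b / s1\<bar>"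
    using assms by (simp add: abs_divide divide_left_mono)
  then have "(b / s)\<^sup>2 \<le> (b / s1)\<^sup>2"
    by (metis abs_ge_zero power2_abs power_mono)
  also have "\<dots> = b\<^sup>2 / s1\<^sup>2" by (simp add: power_divide)
  also have "\<dots> \<le> (1 + b\<^sup>2) / s1\<^sup>2" by (simp add: divide_right_mono)
  finally have "(b / s)\<^sup>2 \<le> (1 + b\<^sup>2) / s1\<^sup>2" .
  then show ?thesis
    by (simp add: algebra_simps) (use zero_le_power2[of b] in linarith)
qed

lemma abs_mult_rescaled_le:
  fixes a h b x s1 A :: real
  assumes "0 < s1" "s1 \<le> x" "\<bar>a\<bar> \<le> A / x" "\<bar>h\<bar> \<le> 1 + (b / x)\<^sup>2"
  shows "\<bar>a * h\<bar> \<le> (A / s1 * (1 + 1 / s1\<^sup>2)) * (1 + b\<^sup>2)"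
proof -
  have x: "0 < x" and A: "0 \<le> A"
    using assms order_trans[OF abs_ge_zero assms(3)] by (auto simp: zero_le_divide_iff)
  have "\<bar>a * h\<bar> \<le> A / x * (1 + (b / x)\<^sup>2)"
    unfolding abs_mult using assms(3,4) by (intro mult_mono) auto
  also have "\<dots> \<le> A / s1 * ((1 + 1 / s1\<^sup>2) * (1 + b\<^sup>2))"
    using assms A one_plus_sq_divide_le[OF assms(1,2), of b]
    by (intro mult_mono divide_left_mono) auto
  finally show ?thesis by (simp add: mult.assoc)
qed

section \<open>Averages over the prior\<close>

locale square_integrable_distribution = real_distribution +
  assumes integrable_square: "integrable M (\<lambda>b. b\<^sup>2)"
begin

lemma borel_measurable_M: "f \<in> borel_measurable borel \<Longrightarrow> f \<in> borel_measurable M"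
  by (simp add: measurable_cong_sets[OF events_eq_borel refl])

lemma integrable_quadratic_bound:
  assumes "f \<in> borel_measurable borel" and bnd: "\<And>b. \<bar>f b\<bar> \<le> K * (1 + b\<^sup>2)"
  shows "integrable M f"
proof (rule Bochner_Integration.integrable_bound)
  show "integrable M (\<lambda>b. K * (1 + b\<^sup>2))"
    using integrable_square by auto
  show "AE b in M. norm (f b) \<le> norm (K * (1 + b\<^sup>2))"
    using bnd by (intro AE_I2) (auto intro: order_trans[OF _ abs_ge_self])
qed (rule borel_measurable_M[OF assms(1)])

lemma integrable_rescaled:
  assumes s: "0 < s" and [measurable]: "f \<in> borel_measurable borel"
    and bnd: "\<And>m. \<bar>f m\<bar> \<le> K * (1 + m\<^sup>2)"
  shows "integrable M (\<lambda>b. f (b / s))"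
proof (rule integrable_quadratic_bound)
  have K: "0 \<le> K"
    using bnd[of 0] by simp
  show "\<bar>f (b / s)\<bar> \<le> (K * (1 + 1 / s\<^sup>2)) * (1 + b\<^sup>2)" for b
    using bnd[of "b / s"] mult_left_mono[OF one_plus_sq_divide_le[OF s order.refl, of b] K]
    by (simp add: mult.assoc)
qed measurable

lemma has_real_derivative_expectation:
  fixes f f' :: "real \<Rightarrow> real \<Rightarrow> real"
  assumes x0: "x0 \<in> {lo<..<hi}"
    and der: "\<And>x b. x \<in> {lo<..<hi} \<Longrightarrow> ((\<lambda>x. f x b) has_real_derivative f' x b) (at x)"
    and bnd: "\<And>x b. x \<in> {lo<..<hi} \<Longrightarrow> \<bar>f' x b\<bar> \<le> K * (1 + b\<^sup>2)"
    and int0: "integrable M (f x0)"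
    and meas: "\<And>x. f x \<in> borel_measurable borel" and meas': "f' x0 \<in> borel_measurable borel"
  shows "((\<lambda>x. \<integral>b. f x b \<partial>M) has_real_derivative (\<integral>b. f' x0 b \<partial>M)) (at x0)"
  using integrable_square
  by (intro has_real_derivative_integral[OF x0 der bnd _ int0 borel_measurable_M borel_measurable_M]
      meas meas') auto

lemma continuous_at_expectation:
  fixes g :: "'p::metric_space \<Rightarrow> real \<Rightarrow> real"
  assumes S: "open S" "p0 \<in> S"
    and cont: "\<And>b. continuous (at p0) (\<lambda>p. g p b)"
    and meas: "\<And>p. g p \<in> borel_measurable borel"
    and bnd: "\<And>p b. p \<in> S \<Longrightarrow> \<bar>g p b\<bar> \<le> K * (1 + b\<^sup>2)"
  shows "continuous (at p0) (\<lambda>p. \<integral>b. g p b \<partial>M)"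
  using integrable_square
  by (intro continuous_at_integral[OF S cont borel_measurable_M bnd] meas) auto

definition risk_mean :: "real \<Rightarrow> real \<Rightarrow> real" where
  "risk_mean c s = (\<integral>b. soft_risk (b / s) c \<partial>M)"

definition exceed_mean :: "real \<Rightarrow> real \<Rightarrow> real" where
  "exceed_mean c s = (\<integral>b. exceed_prob (b / s) c \<partial>M)"

definition density_mean :: "real \<Rightarrow> real \<Rightarrow> real" where
  "density_mean c s = (\<integral>b. exceed_density (b / s) c \<partial>M)"

definition skew_mean :: "real \<Rightarrow> real \<Rightarrow> real" where
  "skew_mean c s = (\<integral>b. b / s * (phi (c - b / s) - phi (c + b / s)) \<partial>M)"

definition deadzone_mean :: "real \<Rightarrow> real \<Rightarrow> real" where
  "deadzone_mean c s = (\<integral>b. (b / s)\<^sup>2 * (1 - exceed_prob (b / s) c) \<partial>M)"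

lemma
  assumes "0 \<le> c" "0 < s"
  shows integrable_soft_risk: "integrable M (\<lambda>b. soft_risk (b / s) c)"
    and integrable_exceed_prob: "integrable M (\<lambda>b. exceed_prob (b / s) c)"
    and integrable_exceed_density: "integrable M (\<lambda>b. exceed_density (b / s) c)"
    and integrable_phi_skew: "integrable M (\<lambda>b. b / s * (phi (c - b / s) - phi (c + b / s)))"
    and integrable_deadzone: "integrable M (\<lambda>b. (b / s)\<^sup>2 * (1 - exceed_prob (b / s) c))"
proof -
  have "\<bar>exceed_prob m c\<bar> \<le> 1 * (1 + m\<^sup>2)" for m
    using exceed_prob_nonneg[of m c] exceed_prob_le_1[OF assms(1), of m]
    by (simp add: abs_le_iff add_increasing2)
  then show "integrable M (\<lambda>b. exceed_prob (b / s) c)"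
    by (intro integrable_rescaled[OF assms(2)]) measurable
  have "\<bar>exceed_density m c\<bar> \<le> 2 * (1 + m\<^sup>2)" for m
    using exceed_density_nonneg[of m c] exceed_density_le_2[of m c]
    by (simp add: abs_le_iff add_increasing2)
  then show "integrable M (\<lambda>b. exceed_density (b / s) c)"
    by (intro integrable_rescaled[OF assms(2)]) measurable
  have "\<bar>m * (phi (c - m) - phi (c + m))\<bar> \<le> 1 * (1 + m\<^sup>2)" for m
    using abs_phi_skew_le[of m c] by simp
  then show "integrable M (\<lambda>b. b / s * (phi (c - b / s) - phi (c + b / s)))"
    by (intro integrable_rescaled[OF assms(2)]) measurable
  have "\<bar>m\<^sup>2 * (1 - exceed_prob m c)\<bar> \<le> 1 * (1 + m\<^sup>2)" for m
    using abs_deadzone_le[OF assms(1), of m] by simp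
  then show "integrable M (\<lambda>b. (b / s)\<^sup>2 * (1 - exceed_prob (b / s) c))"
    by (intro integrable_rescaled[OF assms(2)]) measurable
  show "integrable M (\<lambda>b. soft_risk (b / s) c)"
    using abs_soft_risk_le[OF assms(1)] by (intro integrable_rescaled[OF assms(2)]) measurable
qed

lemma risk_mean_decomp:
  assumes "0 \<le> c" "0 < s"
  shows "risk_mean c s = (1 + c\<^sup>2) * exceed_mean c s - c * density_mean c s - skew_mean c s
    + deadzone_mean c s"
  unfolding risk_mean_def exceed_mean_def density_mean_def skew_mean_def deadzone_mean_def soft_risk_def
  using integrable_exceed_prob[OF assms] integrable_exceed_density[OF assms]
    integrable_phi_skew[OF assms] integrable_deadzone[OF assms]
  by simp

lemma exceed_mean_nonneg: "0 \<le> exceed_mean c s"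
  unfolding exceed_mean_def by (intro Bochner_Integration.integral_nonneg exceed_prob_nonneg)

lemma density_mean_nonneg: "0 \<le> density_mean c s"
  unfolding density_mean_def by (intro Bochner_Integration.integral_nonneg exceed_density_nonneg)

lemma skew_mean_nonneg: "0 \<le> c \<Longrightarrow> 0 \<le> skew_mean c s"
  unfolding skew_mean_def by (intro Bochner_Integration.integral_nonneg phi_skew_nonneg)

lemma deadzone_mean_nonneg: "0 \<le> c \<Longrightarrow> 0 \<le> deadzone_mean c s"
  unfolding deadzone_mean_def
  by (intro Bochner_Integration.integral_nonneg mult_nonneg_nonneg zero_le_power2)
     (simp add: exceed_prob_le_1)

lemma risk_mean_has_real_derivative_c:
  assumes c: "0 < c" and s: "0 < s"
  shows "((\<lambda>c. risk_mean c s) has_real_derivative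
    2 * c * exceed_mean c s - 2 * density_mean c s) (at c)"
proof -
  have "((\<lambda>c. risk_mean c s) has_real_derivative
      (\<integral>b. 2 * c * exceed_prob (b / s) c - 2 * exceed_density (b / s) c \<partial>M)) (at c)"
    unfolding risk_mean_def
  proof (rule has_real_derivative_expectation[where lo=0 and hi="c + 1" and K="2 * (c + 1) + 4"
        and f'="\<lambda>x b. 2 * x * exceed_prob (b / s) x - 2 * exceed_density (b / s) x"])
    show "\<bar>2 * x * exceed_prob (b / s) x - 2 * exceed_density (b / s) x\<bar> \<le> (2 * (c + 1) + 4) * (1 + b\<^sup>2)"
      if "x \<in> {0<..<c + 1}" for x b
    proof -
      have "\<bar>2 * x * exceed_prob (b / s) x - 2 * exceed_density (b / s) x\<bar> \<le> (2 * (c + 1) + 4) * 1"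
        using that abs_soft_risk_derivative_c_le[of x "b / s"] by simp
      also have "\<dots> \<le> (2 * (c + 1) + 4) * (1 + b\<^sup>2)"
        using c by (intro mult_left_mono) auto
      finally show ?thesis .
    qed
  qed (use c s soft_risk_has_real_derivative_c integrable_soft_risk in auto)
  also have "(\<integral>b. 2 * c * exceed_prob (b / s) c - 2 * exceed_density (b / s) c \<partial>M)
      = 2 * c * exceed_mean c s - 2 * density_mean c s"
    unfolding exceed_mean_def density_mean_def
    using integrable_exceed_prob[of c s] integrable_exceed_density[of c s] c s by simp
  finally show ?thesis .
qed

lemma risk_mean_has_real_derivative_s:
  assumes c: "0 \<le> c" and s: "0 < s"
  shows "((\<lambda>s. risk_mean c s) has_real_derivative - (2 / s) * deadzone_mean c s) (at s)"
proof -
  have "((\<lambda>s. risk_mean c s) has_real_derivative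
      (\<integral>b. - (2 / s) * ((b / s)\<^sup>2 * (1 - exceed_prob (b / s) c)) \<partial>M)) (at s)"
    unfolding risk_mean_def
  proof (rule has_real_derivative_expectation[where lo="s / 2" and hi="2 * s"
        and K="2 / (s / 2) * (1 + 1 / (s / 2)\<^sup>2)"
        and f'="\<lambda>x b. - (2 / x) * ((b / x)\<^sup>2 * (1 - exceed_prob (b / x) c))"])
    show "\<bar>- (2 / x) * ((b / x)\<^sup>2 * (1 - exceed_prob (b / x) c))\<bar>
        \<le> 2 / (s / 2) * (1 + 1 / (s / 2)\<^sup>2) * (1 + b\<^sup>2)" if "x \<in> {s / 2<..<2 * s}" for x b
      using that s abs_deadzone_le[OF c, of "b / x"]
      by (intro abs_mult_rescaled_le) auto
  qed (use c s soft_risk_has_real_derivative_scale integrable_soft_risk in auto)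
  then show ?thesis
    unfolding deadzone_mean_def by simp
qed

lemma exceed_mean_has_real_derivative_c:
  assumes c: "0 < c" and s: "0 < s"
  shows "((\<lambda>c. exceed_mean c s) has_real_derivative - density_mean c s) (at c)"
proof -
  have "((\<lambda>c. exceed_mean c s) has_real_derivative (\<integral>b. - exceed_density (b / s) c \<partial>M)) (at c)"
    unfolding exceed_mean_def
  proof (rule has_real_derivative_expectation[where lo=0 and hi="c + 1" and K=2
        and f'="\<lambda>x b. - exceed_density (b / s) x"])
    show "\<bar>- exceed_density (b / s) x\<bar> \<le> 2 * (1 + b\<^sup>2)" for x b
      using exceed_density_nonneg[of "b / s" x] exceed_density_le_2[of "b / s" x]
      by (simp add: add_increasing2)
  qed (use c s exceed_prob_has_real_derivative_c integrable_exceed_prob in auto)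
  then show ?thesis
    unfolding density_mean_def by simp
qed

lemma exceed_mean_has_real_derivative_s:
  assumes c: "0 \<le> c" and s: "0 < s"
  shows "((\<lambda>s. exceed_mean c s) has_real_derivative - (1 / s) * skew_mean c s) (at s)"
proof -
  have "((\<lambda>s. exceed_mean c s) has_real_derivative
      (\<integral>b. - (1 / s) * (b / s * (phi (c - b / s) - phi (c + b / s))) \<partial>M)) (at s)"
    unfolding exceed_mean_def
  proof (rule has_real_derivative_expectation[where lo="s / 2" and hi="2 * s"
        and K="1 / (s / 2) * (1 + 1 / (s / 2)\<^sup>2)"
        and f'="\<lambda>x b. - (1 / x) * (b / x * (phi (c - b / x) - phi (c + b / x)))"])
    show "\<bar>- (1 / x) * (b / x * (phi (c - b / x) - phi (c + b / x)))\<bar>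
        \<le> 1 / (s / 2) * (1 + 1 / (s / 2)\<^sup>2) * (1 + b\<^sup>2)" if "x \<in> {s / 2<..<2 * s}" for x b
      using that s abs_phi_skew_le[of "b / x" c]
      by (intro abs_mult_rescaled_le) auto
  qed (use c s exceed_prob_has_real_derivative_scale integrable_exceed_prob in auto)
  then show ?thesis
    unfolding skew_mean_def by simp
qed

lemma continuous_deadzone_mean:
  assumes c: "0 < c" and s: "0 < s"
  shows "continuous (at (c, s)) (\<lambda>p. deadzone_mean (fst p) (snd p))"
  unfolding deadzone_mean_def
proof (rule continuous_at_expectation[where S="{0<..<c + 1} \<times> {s / 2<..<2 * s}"
      and K="1 + 1 / (s / 2)\<^sup>2"])
  show "\<bar>(b / snd p)\<^sup>2 * (1 - exceed_prob (b / snd p) (fst p))\<bar> \<le> (1 + 1 / (s / 2)\<^sup>2) * (1 + b\<^sup>2)"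
    if "p \<in> {0<..<c + 1} \<times> {s / 2<..<2 * s}" for p b
    using that s abs_deadzone_le[of "fst p" "b / snd p"] one_plus_sq_divide_le[of "s / 2" "snd p" b]
    by (auto simp: mem_Times_iff)
  show "continuous (at (c, s)) (\<lambda>p. (b / snd p)\<^sup>2 * (1 - exceed_prob (b / snd p) (fst p)))" for b
    unfolding exceed_prob_def using s by (intro continuous_intros) auto
qed (use c s in \<open>auto intro: open_Times\<close>)

lemma continuous_skew_mean:
  assumes c: "0 < c" and s: "0 < s"
  shows "continuous (at (c, s)) (\<lambda>p. skew_mean (fst p) (snd p))"
  unfolding skew_mean_def
proof (rule continuous_at_expectation[where S="{0<..<c + 1} \<times> {s / 2<..<2 * s}"
      and K="1 + 1 / (s / 2)\<^sup>2"])
  show "\<bar>b / snd p * (phi (fst p - b / snd p) - phi (fst p + b / snd p))\<bar> \<le> (1 + 1 / (s / 2)\<^sup>2) * (1 + b\<^sup>2)"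
    if "p \<in> {0<..<c + 1} \<times> {s / 2<..<2 * s}" for p b
    using that s abs_phi_skew_le[of "b / snd p" "fst p"] one_plus_sq_divide_le[of "s / 2" "snd p" b]
    by (auto simp: mem_Times_iff)
  show "continuous (at (c, s)) (\<lambda>p. b / snd p * (phi (fst p - b / snd p) - phi (fst p + b / snd p)))" for b
    using s by (intro continuous_intros) auto
qed (use c s in \<open>auto intro: open_Times\<close>)

lemma risk_mean_has_derivative:
  assumes c: "0 < c" and s: "0 < s"
  shows "((\<lambda>p. risk_mean (fst p) (snd p)) has_derivative (\<lambda>(u, v).
    (2 * c * exceed_mean c s - 2 * density_mean c s) * u + (- (2 / s) * deadzone_mean c s) * v)) (at (c, s))"
proof (rule has_derivative_of_partials[where X="{0<..<c + 1}" and Y="{s / 2<..<2 * s}"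
      and B="\<lambda>x y. - (2 / y) * deadzone_mean x y"])
  show "continuous (at (c, s)) (\<lambda>p. - (2 / snd p) * deadzone_mean (fst p) (snd p))"
    using c s continuous_deadzone_mean[OF c s] by (intro continuous_intros) auto
qed (use c s risk_mean_has_real_derivative_c risk_mean_has_real_derivative_s in auto)

lemma exceed_mean_has_derivative:
  assumes c: "0 < c" and s: "0 < s"
  shows "((\<lambda>p. exceed_mean (fst p) (snd p)) has_derivative (\<lambda>(u, v).
    (- density_mean c s) * u + (- (1 / s) * skew_mean c s) * v)) (at (c, s))"
proof (rule has_derivative_of_partials[where X="{0<..<c + 1}" and Y="{s / 2<..<2 * s}"
      and B="\<lambda>x y. - (1 / y) * skew_mean x y"])
  show "continuous (at (c, s)) (\<lambda>p. - (1 / snd p) * skew_mean (fst p) (snd p))"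
    using c s continuous_skew_mean[OF c s] by (intro continuous_intros) auto
qed (use c s exceed_mean_has_real_derivative_c exceed_mean_has_real_derivative_s in auto)

end

section \<open>The fixed point and the slope of \<open>\<lambda>\<close>\<close>

lemma lasso_slope_pos:
  fixes A Dn c s P Q R :: real
  assumes A: "0 < A" and Dn: "0 < Dn" and c: "0 < c" and s: "0 < s"
    and Q: "0 \<le> Q" and R: "0 \<le> R" and P: "0 \<le> P"
    and Dn_eq: "Dn = A + R - c * (c * P - Q)"
  shows "0 < s * A + c * s * Q + c * (s * (c * P - Q) / Dn) * (A + R)"
proof (cases "0 \<le> c * P - Q")
  case True
  then have "0 \<le> c * (s * (c * P - Q) / Dn) * (A + R)"
    using c s Dn A R by simp
  moreover have "0 < s * A" "0 \<le> c * s * Q"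
    using s A c Q by simp_all
  ultimately show ?thesis by linarith
next
  case False
  \<comment> \<open>clearing the denominator leaves a sum of nonnegative terms with one positive term\<close>
  have "A * Dn + c * Q * Dn + c * (c * P - Q) * (A + R)
      = A * (A + R) + c * Q * A + c\<^sup>2 * (Q - c * P) * Q + c\<^sup>2 * R * P"
    unfolding Dn_eq by (simp add: algebra_simps power2_eq_square)
  also have "\<dots> > 0"
    using A R c Q P False by (intro add_pos_nonneg mult_nonneg_nonneg) auto
  finally have "0 < (s / Dn) * (A * Dn + c * Q * Dn + c * (c * P - Q) * (A + R))"
    using s Dn by simp
  also have "\<dots> = s * A + c * s * Q + c * (s * (c * P - Q) / Dn) * (A + R)"
    using Dn by (simp add: field_simps)
  finally show ?thesis .
qed

locale lasso_fixed_point = square_integrable_distribution +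
  fixes \<delta> \<sigma>z2 :: real and U :: "real set" and sigma_hat :: "real \<Rightarrow> real"
  assumes delta_pos: "0 < \<delta>" and noise_pos: "0 < \<sigma>z2"
    and open_U: "open U" and U_pos: "U \<subseteq> {0<..}"
    and sigma_hat_sol: "\<And>c. c \<in> U \<Longrightarrow> 0 < sigma_hat c \<and> fp_eq M \<delta> \<sigma>z2 c (sigma_hat c)"
    and sigma_hat_unique: "\<And>c s. c \<in> U \<Longrightarrow> 0 < s \<Longrightarrow> fp_eq M \<delta> \<sigma>z2 c s \<Longrightarrow> s = sigma_hat c"
begin

definition fp_residual :: "real \<Rightarrow> real \<Rightarrow> real" where
  "fp_residual c s = s\<^sup>2 - \<sigma>z2 - s\<^sup>2 * risk_mean c s / \<delta>"

lemma fp_eq_iff_residual: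
  assumes "0 < c" "0 < s"
  shows "fp_eq M \<delta> \<sigma>z2 c s \<longleftrightarrow> fp_residual c s = 0"
  unfolding fp_eq_def fp_residual_def lasso_mse_eq[OF less_imp_le[OF assms(1)] assms(2)] risk_mean_def
  using delta_pos by (auto simp: field_simps)

lemma fp_residual_has_derivative:
  assumes c: "0 < c" and s: "0 < s"
  shows "((\<lambda>p. fp_residual (fst p) (snd p)) has_derivative (\<lambda>(u, v).
    (- s\<^sup>2 * (2 * c * exceed_mean c s - 2 * density_mean c s) / \<delta>) * u
    + (2 * s * (\<delta> - risk_mean c s + deadzone_mean c s) / \<delta>) * v)) (at (c, s))"
proof -
  have RM: "((\<lambda>p. risk_mean (fst p) (snd p)) has_derivative (\<lambda>h.
      (2 * c * exceed_mean c s - 2 * density_mean c s) * fst h + (- (2 / s) * deadzone_mean c s) * snd h))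
      (at (c, s))"
    using risk_mean_has_derivative[OF c s] by (simp add: split_beta')
  show ?thesis
    unfolding fp_residual_def[abs_def] split_beta'
    using s delta_pos
    by (auto intro!: derivative_eq_intros RM simp: fun_eq_iff field_simps power2_eq_square)
qed

lemma fp_slope_denominator_pos:
  assumes chi: "chi \<in> U"
  shows "0 < \<delta> - risk_mean chi (sigma_hat chi) + deadzone_mean chi (sigma_hat chi)"
proof -
  have chi_pos: "0 < chi" and s0: "0 < sigma_hat chi"
    using chi U_pos sigma_hat_sol by auto
  then have "fp_residual chi (sigma_hat chi) = 0"
    using sigma_hat_sol[OF chi] fp_eq_iff_residual by blast
  then have "(sigma_hat chi)\<^sup>2 * (\<delta> - risk_mean chi (sigma_hat chi)) = \<delta> * \<sigma>z2"
    using delta_pos by (simp add: fp_residual_def field_simps)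
  then have "0 < (sigma_hat chi)\<^sup>2 * (\<delta> - risk_mean chi (sigma_hat chi))"
    using delta_pos noise_pos by simp
  then have "0 < \<delta> - risk_mean chi (sigma_hat chi)"
    by (simp add: zero_less_mult_iff)
  then show ?thesis
    using deadzone_mean_nonneg[of chi "sigma_hat chi"] chi_pos by simp
qed

lemma sigma_hat_has_real_derivative:
  assumes chi: "chi \<in> U"
  defines "s0 \<equiv> sigma_hat chi"
  shows "(sigma_hat has_real_derivative s0 * (chi * exceed_mean chi s0 - density_mean chi s0)
    / (\<delta> - risk_mean chi s0 + deadzone_mean chi s0)) (at chi)"
proof -
  have pos: "\<And>x. x \<in> U \<Longrightarrow> 0 < x" using U_pos by auto
  have root: "0 < sigma_hat x \<and> fp_residual x (sigma_hat x) = 0" if "x \<in> U" for x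
    using sigma_hat_sol[OF that] fp_eq_iff_residual[OF pos[OF that]] by auto
  have uniq: "s = sigma_hat x" if "x \<in> U" "0 < s" "fp_residual x s = 0" for x s
    using sigma_hat_unique[OF that(1,2)] fp_eq_iff_residual[OF pos[OF that(1)] that(2)] that(3) by simp
  have cont: "isCont (\<lambda>p. fp_residual (fst p) (snd p)) (x, s)" if "x \<in> U" "0 < s" for x s
    using fp_residual_has_derivative[OF pos[OF that(1)] that(2)] has_derivative_continuous by blast
  note D = fp_residual_has_derivative[OF pos[OF chi] root[OF chi, THEN conjunct1], folded s0_def]
  have Dn: "0 < \<delta> - risk_mean chi s0 + deadzone_mean chi s0"
    using fp_slope_denominator_pos[OF chi] by (simp add: s0_def)
  have s0: "0 < s0" using root[OF chi] by (simp add: s0_def)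
  have Hs: "((\<lambda>s. fp_residual chi s) has_real_derivative
      2 * s0 * (\<delta> - risk_mean chi s0 + deadzone_mean chi s0) / \<delta>) (at (sigma_hat chi))"
    using has_real_derivative_partial_snd[OF D] by (simp add: s0_def)
  have "isCont sigma_hat chi"
    by (rule isCont_implicit_root[OF open_U chi root uniq cont Hs]) (use Dn s0 delta_pos in auto)
  moreover have "\<forall>\<^sub>F x in at chi. fp_residual x (sigma_hat x) = 0"
    using eventually_at_in_open'[OF open_U chi] by eventually_elim (use root in blast)
  ultimately have "(sigma_hat has_real_derivative
      - (- s0\<^sup>2 * (2 * chi * exceed_mean chi s0 - 2 * density_mean chi s0) / \<delta>)
      / (2 * s0 * (\<delta> - risk_mean chi s0 + deadzone_mean chi s0) / \<delta>)) (at chi)"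
    unfolding s0_def using Dn s0 delta_pos root[OF chi]
    by (intro implicit_has_real_derivative[where H=fp_residual and y=sigma_hat and z=chi, OF D[unfolded s0_def]])
       (simp_all add: s0_def)
  moreover have "- (- s0\<^sup>2 * (2 * chi * p - 2 * q) / \<delta>) / (2 * s0 * n / \<delta>) = s0 * (chi * p - q) / n"
    if "n \<noteq> 0" for p q n
    using that s0 delta_pos by (simp add: field_simps power2_eq_square)
  ultimately show ?thesis
    using Dn by simp
qed

lemma lasso_lambda_eq:
  assumes "c \<in> U"
  shows "lasso_lambda M \<delta> c (sigma_hat c) = c * sigma_hat c * (1 - exceed_mean c (sigma_hat c) / \<delta>)"
proof -
  have "0 < c" "0 < sigma_hat c"
    using assms U_pos sigma_hat_sol[OF assms] by auto
  then show ?thesis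
    by (simp add: lasso_lambda_def lasso_prob_eq exceed_mean_def)
qed

lemma lasso_lambda_has_real_derivative:
  assumes chi: "chi \<in> U"
  defines "s0 \<equiv> sigma_hat chi"
  defines "sdv \<equiv> s0 * (chi * exceed_mean chi s0 - density_mean chi s0)
    / (\<delta> - risk_mean chi s0 + deadzone_mean chi s0)"
  shows "((\<lambda>c. lasso_lambda M \<delta> c (sigma_hat c)) has_real_derivative
    (s0 * (\<delta> - exceed_mean chi s0) + chi * s0 * density_mean chi s0
      + chi * sdv * (\<delta> - exceed_mean chi s0 + skew_mean chi s0)) / \<delta>) (at chi)"
proof -
  have chi_pos: "0 < chi" and s0: "0 < s0"
    using chi U_pos sigma_hat_sol[OF chi] by (auto simp: s0_def)
  have sd: "(sigma_hat has_real_derivative sdv) (at chi)"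
    using sigma_hat_has_real_derivative[OF chi] by (simp add: s0_def sdv_def)
  have "((\<lambda>c. (c, sigma_hat c)) has_derivative (\<lambda>h. (h, sdv * h))) (at chi)"
    using has_derivative_Pair[OF has_derivative_ident sd[unfolded has_field_derivative_def]] by simp
  from has_derivative_compose[OF this exceed_mean_has_derivative[OF chi_pos s0, unfolded s0_def]]
  have "((\<lambda>c. exceed_mean c (sigma_hat c)) has_derivative
      (\<lambda>h. - density_mean chi s0 * h + - (1 / s0) * skew_mean chi s0 * (sdv * h))) (at chi)"
    by (simp add: s0_def)
  then have "((\<lambda>c. exceed_mean c (sigma_hat c)) has_real_derivative
      - density_mean chi s0 - skew_mean chi s0 * sdv / s0) (at chi)"
    unfolding has_field_derivative_def
    by (rule has_derivative_eq_rhs) (simp add: fun_eq_iff algebra_simps)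
  then have "((\<lambda>c. c * sigma_hat c * (1 - exceed_mean c (sigma_hat c) / \<delta>)) has_real_derivative
      (s0 * (\<delta> - exceed_mean chi s0) + chi * s0 * density_mean chi s0
        + chi * sdv * (\<delta> - exceed_mean chi s0 + skew_mean chi s0)) / \<delta>) (at chi)"
    using s0 delta_pos
    by (auto intro!: derivative_eq_intros sd simp: s0_def[symmetric] field_simps)
  then show ?thesis
    by (rule has_field_derivative_transform_within_open[OF _ open_U chi]) (simp add: lasso_lambda_eq)
qed

lemma lasso_lambda_derivative_pos:
  assumes chi: "chi \<in> U" and lambda_pos: "0 < lasso_lambda M \<delta> chi (sigma_hat chi)"
  shows "\<exists>D > 0. ((\<lambda>c. lasso_lambda M \<delta> c (sigma_hat c)) has_real_derivative D) (at chi)"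
proof -
  define s0 where "s0 = sigma_hat chi"
  have chi_pos: "0 < chi" and s0: "0 < s0"
    using chi U_pos sigma_hat_sol[OF chi] by (auto simp: s0_def)
  have "0 < chi * s0 * (1 - exceed_mean chi s0 / \<delta>)"
    using lambda_pos lasso_lambda_eq[OF chi] by (simp add: s0_def)
  then have A: "0 < \<delta> - exceed_mean chi s0"
    using chi_pos s0 delta_pos by (simp add: zero_less_mult_iff field_simps)
  have Dn: "0 < \<delta> - risk_mean chi s0 + deadzone_mean chi s0"
    using fp_slope_denominator_pos[OF chi] by (simp add: s0_def)
  have "\<delta> - risk_mean chi s0 + deadzone_mean chi s0 = (\<delta> - exceed_mean chi s0) + skew_mean chi s0
      - chi * (chi * exceed_mean chi s0 - density_mean chi s0)"
    using risk_mean_decomp[of chi s0] chi_pos s0 by (simp add: power2_eq_square algebra_simps)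
  from lasso_slope_pos[OF A Dn chi_pos s0 density_mean_nonneg skew_mean_nonneg[OF less_imp_le[OF chi_pos]]
      exceed_mean_nonneg this]
  have "0 < (s0 * (\<delta> - exceed_mean chi s0) + chi * s0 * density_mean chi s0
      + chi * (s0 * (chi * exceed_mean chi s0 - density_mean chi s0)
        / (\<delta> - risk_mean chi s0 + deadzone_mean chi s0))
        * (\<delta> - exceed_mean chi s0 + skew_mean chi s0)) / \<delta>"
    using delta_pos by simp
  with lasso_lambda_has_real_derivative[OF chi, folded s0_def] show ?thesis
    by blast
qed

end

theorem lemma9:
  fixes P :: "real measure" and \<delta> \<sigma>z2 chi :: real
    and U :: "real set" and sigma_hat :: "real \<Rightarrow> real"
  assumes P_prob: "prob_space P"
    and P_sets: "sets P = sets borel"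
    and P_moment: "integrable P (\<lambda>b. b\<^sup>2)"
    and delta: "0 < \<delta>" "\<delta> < 1"
    and noise: "0 < \<sigma>z2"
    and U_open: "open U" and U_pos: "U \<subseteq> {0<..}" and chi_U: "chi \<in> U"
    and sigma_hat_sol: "\<And>c. c \<in> U \<Longrightarrow> 0 < sigma_hat c \<and> fp_eq P \<delta> \<sigma>z2 c (sigma_hat c)"
    and sigma_hat_unique: "\<And>c s. c \<in> U \<Longrightarrow> 0 < s \<Longrightarrow> fp_eq P \<delta> \<sigma>z2 c s \<Longrightarrow> s = sigma_hat c"
    and lambda_pos: "0 < lasso_lambda P \<delta> chi (sigma_hat chi)"
  shows "\<exists>D > 0. ((\<lambda>c. lasso_lambda P \<delta> c (sigma_hat c)) has_real_derivative D) (at chi)"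
proof -
  interpret real_distribution P
    using P_prob P_sets by (simp add: real_distribution_def real_distribution_axioms_def)
  interpret lasso_fixed_point P \<delta> \<sigma>z2 U sigma_hat
    using P_moment delta noise U_open U_pos sigma_hat_sol sigma_hat_unique
    by unfold_locales auto
  show ?thesis
    by (rule lasso_lambda_derivative_pos[OF chi_U lambda_pos])
qed

end
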